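(* Let $d \ge 1$ and let $P \subseteq \mathbb{R}^d$ be a $d$-dimensional lattice polytope (i.e. all vertices of $P$ lie in $\mathbb{Z}^d$) such that every facet of $P$ is a simplex and the interior of $P$ contains no point of $\mathbb{Z}^d$. Then $P$ has at most $2^d$ vertices.
   Context: A polytope whose interior contains no lattice point is called hollow; a polytope all of whose facets are simplices is called simplicial. *)

theory Defs
  imports "HOL-Analysis.Analysis"
begin

definition lattice_point :: "real ^ 'n \<Rightarrow> bool" where
  "lattice_point x \<longleftrightarrow> (\<forall>i. x $ i \<in> \<int>)"

definition lattice_polytope :: "(real ^ 'n) set \<Rightarrow> bool" where
  "lattice_polytope P \<longleftrightarrow> (\<exists>V. finite V \<and> (\<forall>v\<in>V. lattice_point v) \<and> P = convex hull V)"

definition hollow :: "(real ^ 'n) set \<Rightarrow> bool" where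
  "hollow P \<longleftrightarrow> (\<forall>x\<in>interior P. \<not> lattice_point x)"

definition simplicial :: "(real ^ 'n) set \<Rightarrow> bool" where
  "simplicial P \<longleftrightarrow> (\<forall>F. F facet_of P \<longrightarrow> (\<exists>k. k simplex F))"

end

theory Submission
  imports Defs
begin

text \<open>
  Call a set \<open>T\<close> facet-independent for \<open>P\<close> if \<open>T \<inter> F\<close> is affinely independent for
  every facet \<open>F\<close>; the vertex set of a simplicial polytope is such a set. Among the
  facet-independent sets of lattice points of \<open>P\<close> with as many points as \<open>P\<close> has
  vertices, take one minimising the sum of squared norms. If two of its points \<open>x \<noteq> y\<close>, with
  \<open>\<parallel>x\<parallel> \<le> \<parallel>y\<parallel>\<close>, were congruent modulo 2, their midpoint \<open>m\<close> would be a lattice point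
  of \<open>P\<close>, hence (by hollowness) on some facet, and every facet through \<open>m\<close> contains
  \<open>x\<close> and \<open>y\<close>. So \<open>m\<close> is not yet in the set (\<open>x, y, m\<close> are affinely dependent),
  and replacing \<open>y\<close> by \<open>m\<close> keeps the size and all facet intersections affinely
  independent while strictly decreasing the sum of squared norms. Hence the points are
  pairwise incongruent modulo 2, and there are at most \<open>2^d\<close> of them.
\<close>

definition facet_independent :: "'a::euclidean_space set \<Rightarrow> 'a set \<Rightarrow> bool" where
  "facet_independent P T \<longleftrightarrow> (\<forall>F. F facet_of P \<longrightarrow> \<not> affine_dependent (T \<inter> F))"

definition lattice_parity :: "real ^ 'n \<Rightarrow> 'n set" where
  "lattice_parity t = {i. odd \<lfloor>t $ i\<rfloor>}"

lemma midpoint_in_affine_hull: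
  assumes "x \<in> affine hull S" "y \<in> affine hull S"
  shows "midpoint x y \<in> affine hull S"
proof -
  have "midpoint x y = (1/2) *\<^sub>R x + (1/2) *\<^sub>R y"
    by (simp add: midpoint_def scaleR_add_right)
  also have "\<dots> \<in> affine hull S"
    using assms by (intro mem_affine) (auto simp: affine_affine_hull)
  finally show ?thesis .
qed

lemma midpoint_notin_affine_independent:
  fixes A :: "'a::euclidean_space set"
  assumes "\<not> affine_dependent A" "x \<in> A" "y \<in> A" "x \<noteq> y"
  shows "midpoint x y \<notin> A"
proof
  have "x \<in> A - {midpoint x y}" "y \<in> A - {midpoint x y}"
    using assms by (metis DiffI midpoint_eq_endpoint singletonD)+
  then have "midpoint x y \<in> affine hull (A - {midpoint x y})"
    by (intro midpoint_in_affine_hull hull_inc)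
  moreover assume "midpoint x y \<in> A"
  ultimately have "affine_dependent A"
    unfolding affine_dependent_def by blast
  with assms(1) show False by simp
qed

lemma affine_hull_insert_midpoint_remove:
  assumes "x \<in> A" "y \<in> A" "x \<noteq> y"
  shows "affine hull (insert (midpoint x y) (A - {y})) = affine hull A"
    (is "affine hull ?A = _")
proof (rule antisym)
  show "affine hull ?A \<subseteq> affine hull A"
    using assms by (intro hull_minimal)
      (auto intro: midpoint_in_affine_hull hull_inc simp: affine_affine_hull)
  have "y = 2 *\<^sub>R midpoint x y + (-1) *\<^sub>R x"
    by (simp add: midpoint_def scaleR_add_right)
  also have "\<dots> \<in> affine hull ?A"
    using assms by (intro mem_affine) (auto intro: hull_inc simp: affine_affine_hull)
  finally show "affine hull A \<subseteq> affine hull ?A"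
    by (intro hull_minimal) (auto intro: hull_inc simp: affine_affine_hull)
qed

lemma affine_independent_insert_midpoint_remove:
  fixes A :: "'a::euclidean_space set"
  assumes "\<not> affine_dependent A" "x \<in> A" "y \<in> A" "x \<noteq> y"
  shows "\<not> affine_dependent (insert (midpoint x y) (A - {y}))"
proof -
  have "finite A"
    using assms(1) aff_independent_finite by blast
  then have "card A > 0"
    using assms(3) card_gt_0_iff by blast
  moreover have "card (insert (midpoint x y) (A - {y})) = card A"
    using \<open>finite A\<close> \<open>card A > 0\<close> assms midpoint_notin_affine_independent[OF assms]
    by (simp add: card.insert_remove)
  moreover have "aff_dim (insert (midpoint x y) (A - {y})) = aff_dim A"
    using affine_hull_insert_midpoint_remove[OF assms(2-4)] by (metis aff_dim_affine_hull)
  ultimately show ?thesis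
    using assms(1) by (simp add: affine_independent_iff_card)
qed

lemma face_through_midpoint:
  assumes "F face_of P" "x \<in> P" "y \<in> P" "x \<noteq> y" "midpoint x y \<in> F"
  shows "x \<in> F" "y \<in> F"
  using assms midpoint_in_open_segment[of x y] unfolding face_of_def by metis+

lemma facet_independent_insert_midpoint_remove:
  assumes "facet_independent P T" "T \<subseteq> P" "x \<in> T" "y \<in> T" "x \<noteq> y"
  shows "facet_independent P (insert (midpoint x y) (T - {y}))"
  unfolding facet_independent_def
proof (intro allI impI)
  fix F assume F: "F facet_of P"
  then have indep: "\<not> affine_dependent (T \<inter> F)"
    using assms(1) unfolding facet_independent_def by blast
  show "\<not> affine_dependent (insert (midpoint x y) (T - {y}) \<inter> F)"
  proof (cases "midpoint x y \<in> F")
    case True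
    then have "x \<in> F" "y \<in> F"
      using face_through_midpoint[OF facet_of_imp_face_of[OF F], of x y] assms by auto
    moreover have "insert (midpoint x y) (T - {y}) \<inter> F = insert (midpoint x y) (T \<inter> F - {y})"
      using True by auto
    ultimately show ?thesis
      using affine_independent_insert_midpoint_remove[OF indep] assms by simp
  next
    case False
    then have "insert (midpoint x y) (T - {y}) \<inter> F \<subseteq> T \<inter> F" by auto
    with indep show ?thesis
      using affine_dependent_subset by blast
  qed
qed

lemma midpoint_notin_facet_independent:
  assumes "facet_independent P T" "T \<subseteq> P" "x \<in> T" "y \<in> T" "x \<noteq> y"
    and "F facet_of P" "midpoint x y \<in> F"
  shows "midpoint x y \<notin> T"
proof -
  have "x \<in> F" "y \<in> F"
    using face_through_midpoint[OF facet_of_imp_face_of[OF assms(6)], of x y] assms by auto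
  moreover have "\<not> affine_dependent (T \<inter> F)"
    using assms unfolding facet_independent_def by blast
  ultimately show ?thesis
    using midpoint_notin_affine_independent[of "T \<inter> F" x y] assms by blast
qed

lemma midpoint_norm_sq_less:
  fixes x y :: "'a::real_inner"
  assumes "x \<noteq> y"
  shows "norm (midpoint x y) ^ 2 < (norm x ^ 2 + norm y ^ 2) / 2"
proof -
  have parallelogram: "norm (x + y) ^ 2 = 2 * norm x ^ 2 + 2 * norm y ^ 2 - norm (x - y) ^ 2"
    using dot_norm[of x y] dot_norm_neg[of x y] by (simp add: field_simps)
  have half: "norm (midpoint x y) = norm (x + y) / 2"
    by (simp add: midpoint_def)
  have "0 < norm (x - y) ^ 2"
    using assms by simp
  then show ?thesis
    unfolding half power_divide using parallelogram by simp
qed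

lemma lattice_point_norm_sq_Ints:
  assumes "lattice_point t"
  shows "norm t ^ 2 \<in> \<int>"
proof -
  have "norm t ^ 2 = (\<Sum>i\<in>UNIV. t $ i * t $ i)"
    by (simp add: power2_norm_eq_inner inner_vec_def)
  also have "\<dots> \<in> \<int>"
    using assms unfolding lattice_point_def by (intro Ints_sum Ints_mult) auto
  finally show ?thesis .
qed

lemma lattice_point_midpoint:
  assumes "lattice_point x" "lattice_point y" "lattice_parity x = lattice_parity y"
  shows "lattice_point (midpoint x y)"
  unfolding lattice_point_def
proof
  fix i
  obtain a b where ab: "x $ i = of_int a" "y $ i = of_int b"
    using assms(1,2) unfolding lattice_point_def by (meson Ints_cases)
  have "\<lfloor>x $ i\<rfloor> = a" "\<lfloor>y $ i\<rfloor> = b"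
    using ab by simp_all
  moreover have "odd \<lfloor>x $ i\<rfloor> \<longleftrightarrow> odd \<lfloor>y $ i\<rfloor>"
    using assms(3) unfolding lattice_parity_def by blast
  ultimately have "odd a \<longleftrightarrow> odd b" by simp
  then obtain k where "a + b = 2 * k"
    by (metis evenE odd_add)
  then have "midpoint x y $ i = of_int k"
    using ab by (simp add: midpoint_def field_simps flip: of_int_add)
  then show "midpoint x y $ i \<in> \<int>" by simp
qed

lemma lattice_polytope_imp_polytope:
  "lattice_polytope P \<Longrightarrow> polytope P"
  unfolding lattice_polytope_def polytope_def by blast

lemma hollow_lattice_point_in_facet:
  fixes P :: "(real ^ 'n) set"
  assumes "polytope P" "aff_dim P = int CARD('n)" "hollow P"
    and "z \<in> P" "lattice_point z"
  shows "\<exists>F. F facet_of P \<and> z \<in> F"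
proof -
  have "rel_interior P = interior P"
    using assms(2) by (intro rel_interior_interior) (simp add: aff_dim_eq_full[symmetric])
  then have "z \<in> rel_frontier P"
    using assms closure_closed[OF polytope_imp_closed]
    unfolding hollow_def rel_frontier_def by auto
  then show ?thesis
    using rel_frontier_of_polyhedron[OF polytope_imp_polyhedron[OF assms(1)]] by blast
qed

lemma simplicial_facet_independent_extreme_points:
  assumes "simplicial P"
  shows "facet_independent P {v. v extreme_point_of P}"
  unfolding facet_independent_def
proof (intro allI impI)
  fix F assume F: "F facet_of P"
  then obtain C where C: "\<not> affine_dependent C" "F = convex hull C"
    using assms unfolding simplicial_def simplex_def by blast
  have "{v. v extreme_point_of P} \<inter> F \<subseteq> C"
    using extreme_point_of_face[OF facet_of_imp_face_of[OF F]] C(2)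
      extreme_point_of_convex_hull by blast
  with C(1) show "\<not> affine_dependent ({v. v extreme_point_of P} \<inter> F)"
    using affine_dependent_subset by blast
qed

lemma lattice_midpoint_exchange:
  fixes P T :: "(real ^ 'n) set"
  assumes facets: "\<And>z. z \<in> P \<Longrightarrow> lattice_point z \<Longrightarrow> \<exists>F. F facet_of P \<and> z \<in> F"
    and "convex P" "finite T" "T \<subseteq> P" "\<forall>t\<in>T. lattice_point t" "facet_independent P T"
    and "x \<in> T" "y \<in> T" "x \<noteq> y" "lattice_parity x = lattice_parity y"
    and "norm x \<le> norm y"
  defines "T' \<equiv> insert (midpoint x y) (T - {y})"
  shows "T' \<subseteq> P" "\<forall>t\<in>T'. lattice_point t" "facet_independent P T'" "card T' = card T"
    and "(\<Sum>t\<in>T'. norm t ^ 2) < (\<Sum>t\<in>T. norm t ^ 2)"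
proof -
  have mP: "midpoint x y \<in> P"
    using assms by (meson convex_contains_segment midpoint_in_closed_segment subsetD)
  have m_lattice: "lattice_point (midpoint x y)"
    using assms by (intro lattice_point_midpoint) auto
  then obtain F where "F facet_of P" "midpoint x y \<in> F"
    using facets mP by blast
  then have m_new: "midpoint x y \<notin> T"
    using midpoint_notin_facet_independent assms by blast
  show "T' \<subseteq> P"
    using mP assms unfolding T'_def by auto
  show "\<forall>t\<in>T'. lattice_point t"
    using m_lattice assms unfolding T'_def by auto
  show "facet_independent P T'"
    using facet_independent_insert_midpoint_remove assms unfolding T'_def by blast
  have "card T > 0"
    using assms card_gt_0_iff by blast
  then show "card T' = card T"
    using m_new assms unfolding T'_def by (simp add: card.insert_remove)
  have "norm (midpoint x y) ^ 2 < (norm x ^ 2 + norm y ^ 2) / 2"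
    using midpoint_norm_sq_less[OF assms(9)] .
  also have "\<dots> \<le> norm y ^ 2"
    using assms(11) by (simp add: power_mono)
  finally have "norm (midpoint x y) ^ 2 < norm y ^ 2" .
  moreover have "(\<Sum>t\<in>T'. norm t ^ 2) = norm (midpoint x y) ^ 2 + (\<Sum>t\<in>T - {y}. norm t ^ 2)"
    using m_new assms(3) unfolding T'_def by simp
  moreover have "(\<Sum>t\<in>T. norm t ^ 2) = norm y ^ 2 + (\<Sum>t\<in>T - {y}. norm t ^ 2)"
    using assms(3,8) by (rule sum.remove)
  ultimately show "(\<Sum>t\<in>T'. norm t ^ 2) < (\<Sum>t\<in>T. norm t ^ 2)"
    by linarith
qed

lemma exists_parity_injective_facet_independent:
  fixes P S :: "(real ^ 'n) set"
  assumes facets: "\<And>z. z \<in> P \<Longrightarrow> lattice_point z \<Longrightarrow> \<exists>F. F facet_of P \<and> z \<in> F"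
    and "convex P" "finite S" "S \<subseteq> P" "\<forall>s\<in>S. lattice_point s" "facet_independent P S"
  obtains T :: "(real ^ 'n) set" where "card T = card S" "inj_on lattice_parity T"
proof -
  define admissible where "admissible T \<longleftrightarrow> finite T \<and> T \<subseteq> P \<and> (\<forall>t\<in>T. lattice_point t)
      \<and> facet_independent P T \<and> card T = card S" for T
  define energy where "energy T = nat \<lfloor>\<Sum>t\<in>T. norm t ^ 2\<rfloor>" for T :: "(real ^ 'n) set"
  have energy: "(\<Sum>t\<in>T. norm t ^ 2) = real (energy T)" if "\<forall>t\<in>T. lattice_point t" for T
  proof -
    have "(\<Sum>t\<in>T. norm t ^ 2) \<in> \<int>"
      using that by (intro Ints_sum lattice_point_norm_sq_Ints) auto
    then obtain k where "(\<Sum>t\<in>T. norm t ^ 2) = of_int k"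
      by (meson Ints_cases)
    moreover have "0 \<le> (\<Sum>t\<in>T. norm t ^ 2)"
      by (simp add: sum_nonneg)
    ultimately show ?thesis
      unfolding energy_def by simp
  qed
  obtain T where adm: "admissible T" and least: "\<And>T'. admissible T' \<Longrightarrow> energy T \<le> energy T'"
    using ex_has_least_nat[of admissible S energy] assms unfolding admissible_def by blast
  have no_pair: False
    if "x \<in> T" "y \<in> T" "x \<noteq> y" "lattice_parity x = lattice_parity y" "norm x \<le> norm y" for x y
  proof -
    let ?T' = "insert (midpoint x y) (T - {y})"
    have T_adm: "finite T" "T \<subseteq> P" "\<forall>t\<in>T. lattice_point t" "facet_independent P T"
      "card T = card S"
      using adm unfolding admissible_def by auto
    note exchange = lattice_midpoint_exchange[OF facets assms(2) T_adm(1-4) that]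
    have "admissible ?T'"
      using exchange T_adm unfolding admissible_def by simp
    moreover have "real (energy ?T') < real (energy T)"
      using exchange(5) energy[OF exchange(2)] energy[OF T_adm(3)] by simp
    ultimately show False
      using least by (meson leD of_nat_less_iff)
  qed
  have "inj_on lattice_parity T"
  proof (rule inj_onI, rule ccontr)
    fix x y
    assume "x \<in> T" "y \<in> T" "lattice_parity x = lattice_parity y" "x \<noteq> y"
    then show False
      using no_pair[of x y] no_pair[of y x] by (cases "norm x \<le> norm y") auto
  qed
  moreover have "card T = card S"
    using adm unfolding admissible_def by blast
  ultimately show thesis
    using that by blast
qed

theorem theorem2p2:
  fixes P :: "(real ^ 'n) set"
  assumes "lattice_polytope P"
    and "aff_dim P = int CARD('n)"
    and "simplicial P"
    and "hollow P"
  shows "card {v. v extreme_point_of P} \<le> 2 ^ CARD('n)"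
proof -
  obtain W where W: "finite W" "\<forall>w\<in>W. lattice_point w" "P = convex hull W"
    using assms(1) unfolding lattice_polytope_def by blast
  let ?V = "{v. v extreme_point_of P}"
  have "?V \<subseteq> W"
    using W(3) extreme_point_of_convex_hull by blast
  then have "finite ?V" "\<forall>v\<in>?V. lattice_point v"
    using W(1,2) finite_subset by blast+
  moreover have "?V \<subseteq> P"
    unfolding extreme_point_of_def by blast
  moreover have "convex P"
    using W(3) by simp
  moreover note hollow_lattice_point_in_facet[OF lattice_polytope_imp_polytope[OF assms(1)] assms(2,4)]
  ultimately obtain T :: "(real ^ 'n) set" where "card T = card ?V" "inj_on lattice_parity T"
    using exists_parity_injective_facet_independent
      simplicial_facet_independent_extreme_points[OF assms(3)] by blast
  then have "card ?V = card (lattice_parity ` T)"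
    by (simp add: card_image)
  also have "\<dots> \<le> card (UNIV :: 'n set set)"
    by (rule card_mono) auto
  also have "\<dots> = 2 ^ CARD('n)"
    by (simp add: card_UNIV_set)
  finally show ?thesis .
qed

end
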